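(* Let $G$ be a $K_3$-free graph and let $P=X_PY_P$ and $Q=X_QY_Q$ be two bicliques of $G$ that are not mutually included and satisfy $X_P\cap X_Q\neq\emptyset$. Then there is a biclique $R=X_RY_R$ of $G$ with $X_R=X_P\cap X_Q$ and $Y_R\supseteq Y_P\cup Y_Q$.
   Context: All graphs are finite and simple. A biclique of a graph $G$ is a set $P\subseteq V(G)$ such that the induced subgraph $G[P]$ is a complete bipartite graph with both parts nonempty, and $P$ is inclusion-maximal with this property. Since $G[P]$ is connected, its bipartition into two nonempty independent sets $X,Y$ (every vertex of $X$ adjacent to every vertex of $Y$) is unique; we write $P=XY$ to mean $P=X\cup Y$ with $X,Y$ these two parts, called the sides of $P$. Two bicliques $P,Q$ of $G$ are mutually included if their sides can be named $P=X_PY_P$, $Q=X_QY_Q$ so that $X_Q\subsetneq X_P$ and $Y_P\subsetneq Y_Q$. *)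

theory Defs
  imports Main
begin

definition simple_graph :: "'a set \<Rightarrow> ('a \<Rightarrow> 'a \<Rightarrow> bool) \<Rightarrow> bool" where
  "simple_graph V E \<longleftrightarrow> finite V \<and> (\<forall>x y. E x y \<longrightarrow> x \<in> V \<and> y \<in> V)
     \<and> (\<forall>x y. E x y \<longrightarrow> E y x) \<and> (\<forall>x. \<not> E x x)"

definition K3_free :: "'a set \<Rightarrow> ('a \<Rightarrow> 'a \<Rightarrow> bool) \<Rightarrow> bool" where
  "K3_free V E \<longleftrightarrow> \<not> (\<exists>x\<in>V. \<exists>y\<in>V. \<exists>z\<in>V. E x y \<and> E y z \<and> E x z)"

definition is_bipartition :: "('a \<Rightarrow> 'a \<Rightarrow> bool) \<Rightarrow> 'a set \<Rightarrow> 'a set \<Rightarrow> 'a set \<Rightarrow> bool" where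
  "is_bipartition E P X Y \<longleftrightarrow> P = X \<union> Y \<and> X \<inter> Y = {} \<and> X \<noteq> {} \<and> Y \<noteq> {}
     \<and> (\<forall>x\<in>X. \<forall>x'\<in>X. \<not> E x x') \<and> (\<forall>y\<in>Y. \<forall>y'\<in>Y. \<not> E y y')
     \<and> (\<forall>x\<in>X. \<forall>y\<in>Y. E x y)"

definition complete_bipartite_set :: "('a \<Rightarrow> 'a \<Rightarrow> bool) \<Rightarrow> 'a set \<Rightarrow> bool" where
  "complete_bipartite_set E P \<longleftrightarrow> (\<exists>X Y. is_bipartition E P X Y)"

definition biclique :: "'a set \<Rightarrow> ('a \<Rightarrow> 'a \<Rightarrow> bool) \<Rightarrow> 'a set \<Rightarrow> bool" where
  "biclique V E P \<longleftrightarrow> P \<subseteq> V \<and> complete_bipartite_set E P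
     \<and> (\<forall>P'. P \<subseteq> P' \<and> P' \<subseteq> V \<and> complete_bipartite_set E P' \<longrightarrow> P' = P)"

definition mutually_included :: "'a set \<Rightarrow> ('a \<Rightarrow> 'a \<Rightarrow> bool) \<Rightarrow> 'a set \<Rightarrow> 'a set \<Rightarrow> bool" where
  "mutually_included V E P Q \<longleftrightarrow> biclique V E P \<and> biclique V E Q \<and>
     (\<exists>XP YP XQ YQ. is_bipartition E P XP YP \<and> is_bipartition E Q XQ YQ
        \<and> XQ \<subset> XP \<and> YP \<subset> YQ)"

end

theory Submission
  imports Defs
begin

text \<open>In a triangle-free graph the common neighbourhood of a nonempty set is independent.
  For a biclique \<open>P = XY\<close>, every common neighbour \<open>z\<close> of \<open>Y\<close> could be added to \<open>X\<close>
  (a neighbour of \<open>z\<close> in \<open>X\<close> would close a triangle with any vertex of \<open>Y\<close>), so by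
  maximality \<open>N(Y) = X\<close>. Hence with \<open>X\<^sub>R = X\<^sub>P \<inter> X\<^sub>Q\<close> and \<open>Y\<^sub>R = N(X\<^sub>R) \<supseteq> Y\<^sub>P \<union> Y\<^sub>Q\<close> we get
  \<open>N(Y\<^sub>R) \<subseteq> N(Y\<^sub>P) \<inter> N(Y\<^sub>Q) = X\<^sub>R\<close>, and a pair of sides that determine each other
  as common neighbourhoods spans a biclique.\<close>

definition common_nbhd :: "('a \<Rightarrow> 'a \<Rightarrow> bool) \<Rightarrow> 'a set \<Rightarrow> 'a set" where
  "common_nbhd E S = {z. \<forall>s\<in>S. E s z}"

definition independent :: "('a \<Rightarrow> 'a \<Rightarrow> bool) \<Rightarrow> 'a set \<Rightarrow> bool" where
  "independent E S \<longleftrightarrow> (\<forall>x\<in>S. \<forall>y\<in>S. \<not> E x y)"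

lemma simple_graph_sym: "simple_graph V E \<Longrightarrow> E x y \<Longrightarrow> E y x"
  unfolding simple_graph_def by blast

lemma simple_graph_edge_in_V: "simple_graph V E \<Longrightarrow> E x y \<Longrightarrow> x \<in> V \<and> y \<in> V"
  unfolding simple_graph_def by blast

lemma is_bipartition_iff:
  "is_bipartition E P X Y \<longleftrightarrow> P = X \<union> Y \<and> X \<inter> Y = {} \<and> X \<noteq> {} \<and> Y \<noteq> {}
     \<and> independent E X \<and> independent E Y \<and> Y \<subseteq> common_nbhd E X"
  unfolding is_bipartition_def independent_def common_nbhd_def by blast

lemma is_bipartition_swap:
  assumes "simple_graph V E" "is_bipartition E P X Y"
  shows "is_bipartition E P Y X"
  using assms(2) simple_graph_sym[OF assms(1)]
  unfolding is_bipartition_def by (simp add: Un_commute Int_commute)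

lemma biclique_subset: "biclique V E P \<Longrightarrow> P \<subseteq> V"
  unfolding biclique_def by blast

lemma independent_common_nbhd:
  assumes "simple_graph V E" "K3_free V E" "x \<in> S" "x \<in> V"
  shows "independent E (common_nbhd E S)"
  using assms simple_graph_edge_in_V[OF assms(1)]
  unfolding independent_def common_nbhd_def K3_free_def by blast

lemma biclique_common_nbhd_side:
  assumes g: "simple_graph V E" and k: "K3_free V E"
    and b: "biclique V E P" and bp: "is_bipartition E P X Y"
  shows "common_nbhd E Y \<subseteq> X"
proof
  fix z assume "z \<in> common_nbhd E Y"
  hence z: "\<forall>y\<in>Y. E y z" unfolding common_nbhd_def by blast
  from bp obtain y0 where y0: "y0 \<in> Y" unfolding is_bipartition_def by blast
  have zV: "z \<in> V" using simple_graph_edge_in_V[OF g] z y0 by blast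
  have zY: "z \<notin> Y" using bp z g unfolding is_bipartition_def simple_graph_def by blast
  have PV: "P \<subseteq> V" using biclique_subset[OF b] .
  have "independent E (insert z X)"
    unfolding independent_def
  proof (intro ballI notI)
    fix x x' assume xx: "x \<in> insert z X" "x' \<in> insert z X" and e: "E x x'"
    \<comment> \<open>\<open>z\<close>, its neighbour in \<open>X\<close> and \<open>y0\<close> would form a triangle\<close>
    have "\<not> (x \<in> X \<and> x' \<in> X)" using e bp unfolding is_bipartition_def by blast
    with xx e g obtain a where a: "a \<in> X" "E a z"
      unfolding simple_graph_def by blast
    have "E a y0" "E y0 z" using a bp y0 z unfolding is_bipartition_def by auto
    moreover have "a \<in> V" "y0 \<in> V" using a y0 bp PV unfolding is_bipartition_def by auto
    ultimately show False using k a zV unfolding K3_free_def by blast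
  qed
  hence "is_bipartition E (insert z P) (insert z X) Y"
    using bp zY z simple_graph_sym[OF g]
    unfolding is_bipartition_iff common_nbhd_def by auto
  hence "complete_bipartite_set E (insert z P)" unfolding complete_bipartite_set_def by blast
  with b PV zV have "insert z P = P" unfolding biclique_def by blast
  thus "z \<in> X" using bp zY unfolding is_bipartition_def by auto
qed

lemma bipartition_sides_contain:
  assumes bp: "is_bipartition E P' A B" and sub: "X \<union> Y \<subseteq> P'"
    and cross: "Y \<subseteq> common_nbhd E X" and x0: "x0 \<in> X" "x0 \<in> A" and y0: "y0 \<in> Y"
  shows "X \<subseteq> A" "Y \<subseteq> B"
proof -
  have split: "\<And>v. v \<in> P' \<Longrightarrow> v \<in> A \<or> v \<in> B" and indA: "independent E A"
    and indB: "independent E B"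
    using bp unfolding is_bipartition_iff by auto
  show YB: "Y \<subseteq> B"
    using split indA x0 sub cross unfolding independent_def common_nbhd_def by blast
  show "X \<subseteq> A"
    using split indB y0 YB sub cross unfolding independent_def common_nbhd_def by blast
qed

lemma biclique_of_common_nbhd:
  assumes g: "simple_graph V E"
    and XV: "X \<subseteq> V" and Xne: "X \<noteq> {}" and indX: "independent E X"
    and Yne: "common_nbhd E X \<noteq> {}" and indY: "independent E (common_nbhd E X)"
    and closed: "common_nbhd E (common_nbhd E X) \<subseteq> X"
  shows "biclique V E (X \<union> common_nbhd E X)"
    and "is_bipartition E (X \<union> common_nbhd E X) X (common_nbhd E X)"
proof -
  define Y where "Y = common_nbhd E X"
  obtain x0 y0 where x0: "x0 \<in> X" and y0: "y0 \<in> Y" using Xne Yne Y_def by blast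
  have disj: "X \<inter> Y = {}" using g unfolding Y_def common_nbhd_def simple_graph_def by blast
  show bipR: "is_bipartition E (X \<union> common_nbhd E X) X (common_nbhd E X)"
    using Xne Yne disj indX indY unfolding is_bipartition_iff Y_def by simp
  have YV: "Y \<subseteq> V"
    using x0 simple_graph_edge_in_V[OF g] unfolding Y_def common_nbhd_def by blast
  have maximal: "P' = X \<union> Y"
    if sub: "X \<union> Y \<subseteq> P'" and bp: "is_bipartition E P' A B" and a: "x0 \<in> A" for P' A B
  proof -
    have XA: "X \<subseteq> A" and YB: "Y \<subseteq> B"
      using bipartition_sides_contain[OF bp sub _ x0 a y0] Y_def by auto
    have "B \<subseteq> Y" using bp XA unfolding is_bipartition_iff Y_def common_nbhd_def by blast
    moreover have "A \<subseteq> common_nbhd E Y"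
      using bp YB simple_graph_sym[OF g] unfolding is_bipartition_iff common_nbhd_def by blast
    ultimately show ?thesis
      using bp XA YB closed Y_def unfolding is_bipartition_def by blast
  qed
  have "X \<union> Y \<subseteq> P' \<Longrightarrow> complete_bipartite_set E P' \<Longrightarrow> P' = X \<union> Y" for P'
  proof -
    assume sub: "X \<union> Y \<subseteq> P'" and "complete_bipartite_set E P'"
    then obtain A B where bp: "is_bipartition E P' A B" unfolding complete_bipartite_set_def by blast
    have "x0 \<in> A \<or> x0 \<in> B" using bp sub x0 unfolding is_bipartition_def by blast
    thus "P' = X \<union> Y" using maximal[OF sub bp] maximal[OF sub is_bipartition_swap[OF g bp]] by blast
  qed
  with bipR XV YV show "biclique V E (X \<union> common_nbhd E X)"
    unfolding biclique_def complete_bipartite_set_def Y_def by blast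
qed

theorem lemma1:
  fixes V :: "'a set" and E :: "'a \<Rightarrow> 'a \<Rightarrow> bool"
    and P Q XP YP XQ YQ :: "'a set"
  assumes "simple_graph V E"
    and "K3_free V E"
    and "biclique V E P" and "is_bipartition E P XP YP"
    and "biclique V E Q" and "is_bipartition E Q XQ YQ"
    and "\<not> mutually_included V E P Q"
    and "XP \<inter> XQ \<noteq> {}"
  shows "\<exists>R YR. biclique V E R \<and> is_bipartition E R (XP \<inter> XQ) YR \<and> YP \<union> YQ \<subseteq> YR"
proof -
  note g = assms(1) and k = assms(2) and bP = assms(3,4) and bQ = assms(5,6)
  define X where "X = XP \<inter> XQ"
  obtain x0 where x0: "x0 \<in> X" using assms(8) X_def by blast
  have XV: "X \<subseteq> V"
    using biclique_subset[OF assms(3)] bP(2) unfolding X_def is_bipartition_def by blast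
  have indX: "independent E X" using bP(2) unfolding X_def is_bipartition_iff independent_def by blast
  have sub: "YP \<union> YQ \<subseteq> common_nbhd E X"
    using bP(2) bQ(2) unfolding X_def is_bipartition_def common_nbhd_def by blast
  have "YP \<noteq> {}" using bP(2) unfolding is_bipartition_def by blast
  hence Yne: "common_nbhd E X \<noteq> {}" using sub by blast
  have "common_nbhd E (common_nbhd E X) \<subseteq> common_nbhd E YP \<inter> common_nbhd E YQ"
    using sub unfolding common_nbhd_def by blast
  also have "\<dots> \<subseteq> X"
    using biclique_common_nbhd_side[OF g k bP] biclique_common_nbhd_side[OF g k bQ] X_def by blast
  finally have closed: "common_nbhd E (common_nbhd E X) \<subseteq> X" .
  note R = biclique_of_common_nbhd[OF g XV _ indX Yne
      independent_common_nbhd[OF g k x0 subsetD[OF XV x0]] closed]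
  show ?thesis using R x0 sub unfolding X_def by blast
qed

end
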